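(* Let $X=PS$ where $P,S\in\mathrm{Sym}(n)$ and $P$ is positive definite. Let $\lambda_{\min},\lambda_{\max}$ be the smallest and largest eigenvalues of $P$, $\varrho=\lambda_{\min}/\lambda_{\max}\in(0,1]$ and $c=\frac{(1-\varrho)^2}{1+\varrho^2}\in[0,1)$. Then $$\operatorname{tr}(X^2)-|X|^2\ge -c\,|\mathring X|^2,$$ where $\mathring X=X-\frac{\operatorname{tr}X}{n}\mathrm{Id}$.
   Context: $\mathrm{Sym}(n)$ denotes real symmetric $n\times n$ matrices; $|X|^2=\operatorname{tr}(XX^{\mathsf T})$ is the squared Frobenius norm. *)

theory Defs
  imports "HOL-Analysis.Analysis"
begin

definition sym_matrix :: "real^'n^'n \<Rightarrow> bool" where
  "sym_matrix A \<longleftrightarrow> transpose A = A"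

definition pos_def_matrix :: "real^'n^'n \<Rightarrow> bool" where
  "pos_def_matrix A \<longleftrightarrow> sym_matrix A \<and> (\<forall>x. x \<noteq> 0 \<longrightarrow> x \<bullet> (A *v x) > 0)"

definition mat_eigenvalues :: "real^'n^'n \<Rightarrow> real set" where
  "mat_eigenvalues A = {l. \<exists>v. v \<noteq> 0 \<and> A *v v = l *\<^sub>R v}"

definition frob_sq :: "real^'n^'n \<Rightarrow> real" where
  "frob_sq X = trace (X ** transpose X)"

definition trace_free :: "real^'n^'n \<Rightarrow> real^'n^'n" where
  "trace_free X = X - (trace X / real CARD('n)) *\<^sub>R mat 1"

end

theory Submission
  imports Defs
begin

text \<open>
  In an orthonormal eigenbasis of \<open>P\<close>, with eigenvalues \<open>p\<^sub>k \<in> [\<lambda>\<^sub>m\<^sub>i\<^sub>n, \<lambda>\<^sub>m\<^sub>a\<^sub>x]\<close> and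
  \<open>s\<^sub>k\<^sub>j\<close> the (symmetric) coefficients of \<open>S\<close>, one has
  \<open>tr(X\<^sup>2) = \<Sum>\<^sub>k\<^sub>j p\<^sub>k p\<^sub>j s\<^sub>k\<^sub>j\<^sup>2\<close>, \<open>|X|\<^sup>2 = \<Sum>\<^sub>k\<^sub>j p\<^sub>k\<^sup>2 s\<^sub>k\<^sub>j\<^sup>2\<close> and \<open>tr X = \<Sum>\<^sub>k p\<^sub>k s\<^sub>k\<^sub>k\<close>.
  For \<open>x, y\<close> in the pinched interval, \<open>2xy - (1 - c)(x\<^sup>2 + y\<^sup>2)\<close> factors as
  \<open>2(y - \<rho>x)(x - \<rho>y)/(1 + \<rho>\<^sup>2) \<ge> 0\<close>, so after symmetrising
  \<open>tr(X\<^sup>2) - |X|\<^sup>2 + c|X|\<^sup>2\<close> is bounded below by its diagonal part \<open>c \<Sum>\<^sub>k (p\<^sub>k s\<^sub>k\<^sub>k)\<^sup>2\<close>,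
  which by Cauchy-Schwarz is at least \<open>c (tr X)\<^sup>2/n\<close>; and \<open>|X\<ring>|\<^sup>2 = |X|\<^sup>2 - (tr X)\<^sup>2/n\<close>.
\<close>

lemma sym_matrix_inner_commute:
  fixes A :: "real^'n^'n"
  assumes "sym_matrix A"
  shows "x \<bullet> (A *v y) = (A *v x) \<bullet> y"
proof -
  have "x v* A = A *v x"
    using assms vector_transpose_matrix[of x A] unfolding sym_matrix_def by simp
  then show ?thesis using dot_lmul_matrix[of x A y] by simp
qed

lemma quadratic_nonneg_imp_linear_coeff_zero:
  fixes a b :: real
  assumes "0 \<le> b" and nonneg: "\<And>t. 0 \<le> 2 * t * a + t\<^sup>2 * b"
  shows "a = 0"
proof -
  define t where "t = - a / (b + 1)"
  have tb: "t * (b + 1) = - a" using \<open>0 \<le> b\<close> by (simp add: t_def)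
  have "0 \<le> (b + 1)\<^sup>2 * (2 * t * a + t\<^sup>2 * b)" using nonneg[of t] by simp
  also have "\<dots> = 2 * (t * (b + 1)) * a * (b + 1) + (t * (b + 1))\<^sup>2 * b"
    by (simp add: algebra_simps power2_eq_square)
  also have "\<dots> = - a\<^sup>2 * (b + 2)"
    unfolding tb by (simp add: algebra_simps power2_eq_square)
  finally have "a\<^sup>2 * (b + 2) \<le> 0" by simp
  then have "a\<^sup>2 \<le> 0" using \<open>0 \<le> b\<close> by (simp add: mult_le_0_iff)
  then show ?thesis by simp
qed

text \<open>A minimiser of the Rayleigh quotient on the unit sphere of \<open>W\<close> is an eigenvector.\<close>

lemma sym_matrix_eigenvector_in_invariant_subspace:
  fixes A :: "real^'n^'n"
  assumes sym: "sym_matrix A" and W: "subspace W" and inv: "\<And>x. x \<in> W \<Longrightarrow> A *v x \<in> W"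
    and "x\<^sub>0 \<in> W" "x\<^sub>0 \<noteq> 0"
  obtains u l where "u \<in> W" "norm u = 1" "A *v u = l *\<^sub>R u"
proof -
  define K where "K = W \<inter> sphere 0 1"
  have "compact K" unfolding K_def
    by (simp add: W closed_Int_compact closed_subspace)
  moreover have "x\<^sub>0 /\<^sub>R norm x\<^sub>0 \<in> K" using assms(4,5) W unfolding K_def
    by (simp add: subspace_scale)
  moreover have "continuous_on K (\<lambda>x. x \<bullet> (A *v x))"
    by (intro continuous_intros linear_continuous_on matrix_vector_mul_linear bounded_linear_intros)
  ultimately obtain u where "u \<in> K" and umin: "\<And>y. y \<in> K \<Longrightarrow> u \<bullet> (A *v u) \<le> y \<bullet> (A *v y)"
    using continuous_attains_inf[of K] by blast
  then have uW: "u \<in> W" and nu: "norm u = 1" by (auto simp: K_def)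
  define m where "m = u \<bullet> (A *v u)"
  have ge: "m * (y \<bullet> y) \<le> y \<bullet> (A *v y)" if "y \<in> W" for y
  proof (cases "y = 0")
    case False
    then have "y /\<^sub>R norm y \<in> K" using that W unfolding K_def by (simp add: subspace_scale)
    then have "m \<le> (y /\<^sub>R norm y) \<bullet> (A *v (y /\<^sub>R norm y))" using umin m_def by blast
    also have "\<dots> = (y \<bullet> (A *v y)) / (norm y)\<^sup>2"
      by (simp add: matrix_vector_mult_scaleR power2_eq_square divide_inverse)
    finally show ?thesis using False by (simp add: field_simps power2_norm_eq_inner)
  qed simp
  define v where "v = A *v u - m *\<^sub>R u"
  have orth: "w \<bullet> v = 0" if wW: "w \<in> W" for w
  proof (rule quadratic_nonneg_imp_linear_coeff_zero)
    show "0 \<le> w \<bullet> (A *v w) - m * (w \<bullet> w)" using ge[OF wW] by simp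
    fix t
    have u_unit: "u \<bullet> u = 1" using nu by (simp add: dot_square_norm)
    have "u + t *\<^sub>R w \<in> W" using uW wW W by (simp add: subspace_add subspace_scale)
    from ge[OF this] have "0 \<le> (u + t *\<^sub>R w) \<bullet> (A *v (u + t *\<^sub>R w)) - m * ((u + t *\<^sub>R w) \<bullet> (u + t *\<^sub>R w))"
      by simp
    also have "\<dots> = 2 * t * (w \<bullet> v) + t\<^sup>2 * (w \<bullet> (A *v w) - m * (w \<bullet> w))"
      using sym_matrix_inner_commute[OF sym, of u w] u_unit
      by (simp add: v_def m_def matrix_vector_right_distrib matrix_vector_mult_scaleR
          inner_add_left inner_add_right inner_diff_right algebra_simps power2_eq_square inner_commute)
    finally show "0 \<le> 2 * t * (w \<bullet> v) + t\<^sup>2 * (w \<bullet> (A *v w) - m * (w \<bullet> w))" .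
  qed
  have "v \<in> W" unfolding v_def using inv uW W by (simp add: subspace_diff subspace_scale)
  then have "v \<bullet> v = 0" by (rule orth)
  then have "A *v u = m *\<^sub>R u" unfolding v_def by simp
  then show ?thesis using that uW nu by blast
qed

lemma sym_matrix_orthonormal_eigenvectors:
  fixes A :: "real^'n^'n"
  assumes sym: "sym_matrix A" and "k \<le> CARD('n)"
  shows "\<exists>B. finite B \<and> card B = k \<and> pairwise orthogonal B \<and>
           (\<forall>b\<in>B. norm b = 1 \<and> (\<exists>l. A *v b = l *\<^sub>R b))"
  using \<open>k \<le> CARD('n)\<close>
proof (induction k)
  case 0
  show ?case by (rule exI[of _ "{}"]) simp
next
  case (Suc k)
  then obtain B where B: "finite B" "card B = k" "pairwise orthogonal B"
    "\<And>b. b \<in> B \<Longrightarrow> norm b = 1 \<and> (\<exists>l. A *v b = l *\<^sub>R b)" by auto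
  have "0 \<notin> B" using B(4) by force
  then have "independent B" using B(3) pairwise_orthogonal_independent by blast
  then have "dim B < DIM(real^'n)" using dim_eq_card_independent[of B] B(2) Suc.prems by simp
  then obtain x where x: "x \<noteq> 0" "\<And>y. y \<in> span B \<Longrightarrow> orthogonal x y"
    using orthogonal_to_subspace_exists by blast
  define W where "W = {y. \<forall>b\<in>B. orthogonal b y}"
  have W: "subspace W" unfolding W_def by (rule subspace_orthogonal_to_vectors)
  have xW: "x \<in> W" unfolding W_def using x(2) span_base orthogonal_commute by blast
  have inv: "A *v y \<in> W" if "y \<in> W" for y
  proof -
    have "b \<bullet> (A *v y) = 0" if "b \<in> B" for b
    proof -
      obtain l where "A *v b = l *\<^sub>R b" using B(4)[OF \<open>b \<in> B\<close>] by blast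
      then have "b \<bullet> (A *v y) = l * (b \<bullet> y)" by (simp add: sym_matrix_inner_commute[OF sym])
      then show ?thesis using \<open>y \<in> W\<close> \<open>b \<in> B\<close> unfolding W_def orthogonal_def by simp
    qed
    then show ?thesis unfolding W_def orthogonal_def by blast
  qed
  obtain u l where u: "u \<in> W" "norm u = 1" "A *v u = l *\<^sub>R u"
    using sym_matrix_eigenvector_in_invariant_subspace[OF sym W inv xW x(1)] .
  have "u \<notin> B"
  proof
    assume "u \<in> B"
    then have "orthogonal u u" using u(1) W_def by blast
    then show False using u(2) by (simp add: orthogonal_def)
  qed
  then show ?case
    using B u unfolding W_def
    by (intro exI[of _ "insert u B"]) (auto intro!: pairwise_orthogonal_insert simp: orthogonal_commute)
qed

definition orthonormal_family :: "('i \<Rightarrow> 'a::real_inner) \<Rightarrow> bool" where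
  "orthonormal_family U \<longleftrightarrow> (\<forall>k l. U k \<bullet> U l = (if k = l then 1 else 0))"

lemma sym_matrix_orthonormal_eigenbasis:
  fixes A :: "real^'n^'n"
  assumes sym: "sym_matrix A"
  obtains U :: "'n \<Rightarrow> real^'n" and p :: "'n \<Rightarrow> real"
  where "orthonormal_family U" and "\<And>k. A *v U k = p k *\<^sub>R U k"
proof -
  obtain B where B: "finite B" "card B = CARD('n)" "pairwise orthogonal B"
    "\<And>b. b \<in> B \<Longrightarrow> norm b = 1 \<and> (\<exists>l. A *v b = l *\<^sub>R b)"
    using sym_matrix_orthonormal_eigenvectors[OF sym, of "CARD('n)"] by auto
  obtain U where U: "bij_betw U (UNIV::'n set) B"
    using finite_same_card_bij[of "UNIV::'n set" B] B(1,2) by auto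
  have UB: "U k \<in> B" for k using U bij_betwE by blast
  define p where "p k = (SOME l. A *v U k = l *\<^sub>R U k)" for k
  have "A *v U k = p k *\<^sub>R U k" for k
    unfolding p_def using B(4)[OF UB[of k]] by (metis (mono_tags, lifting) someI_ex)
  moreover have "orthonormal_family U"
    unfolding orthonormal_family_def
  proof (intro allI)
    fix k l
    show "U k \<bullet> U l = (if k = l then 1 else 0)"
    proof (cases "k = l")
      case True
      then show ?thesis using B(4)[OF UB[of k]] by (simp add: dot_square_norm)
    next
      case False
      then have "U k \<noteq> U l" using U unfolding bij_betw_def inj_on_def by blast
      then show ?thesis using B(3) UB False unfolding pairwise_def orthogonal_def by simp
    qed
  qed
  ultimately show ?thesis using that by blast
qed

lemma orthonormal_family_expansion:
  fixes U :: "'n \<Rightarrow> real^'n"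
  assumes on: "orthonormal_family U"
  shows "x = (\<Sum>k\<in>UNIV. (U k \<bullet> x) *\<^sub>R U k)"
proof -
  have "inj U"
    using on unfolding orthonormal_family_def inj_def by (metis one_neq_zero)
  moreover have "0 \<notin> range U"
    using on unfolding orthonormal_family_def by (metis imageE inner_zero_left zero_neq_one)
  moreover have "pairwise orthogonal (range U)"
    using on unfolding orthonormal_family_def pairwise_def orthogonal_def by auto
  ultimately have "independent (range U)" "card (range U) = dim (UNIV :: (real^'n) set)"
    by (simp_all add: pairwise_orthogonal_independent card_image)
  then have "UNIV \<subseteq> span (range U)"
    using card_eq_dim[of "range U" UNIV] by simp
  define z where "z = x - (\<Sum>k\<in>UNIV. (U k \<bullet> x) *\<^sub>R U k)"
  have "U j \<bullet> z = 0" for j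
  proof -
    have "(\<Sum>k\<in>UNIV. (U k \<bullet> x) * (U j \<bullet> U k)) = (\<Sum>k\<in>UNIV. if j = k then U k \<bullet> x else 0)"
      using on unfolding orthonormal_family_def by (intro sum.cong) simp_all
    then show ?thesis unfolding z_def by (simp add: inner_diff_right inner_sum_right)
  qed
  then have "orthogonal z y" if "y \<in> range U" for y
    using that by (auto simp: orthogonal_def inner_commute)
  then have "orthogonal z z"
    using orthogonal_to_span \<open>UNIV \<subseteq> span (range U)\<close> by blast
  then show ?thesis unfolding z_def by (simp add: orthogonal_def)
qed

lemma trace_eq_sum_orthonormal_family:
  fixes U :: "'n \<Rightarrow> real^'n" and M :: "real^'n^'n"
  assumes "orthonormal_family U"
  shows "trace M = (\<Sum>k\<in>UNIV. U k \<bullet> (M *v U k))"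
proof -
  have delta: "(\<Sum>k\<in>UNIV. U k $ j * U k $ i) = (if i = j then 1 else 0)" for i j
  proof -
    have "(axis j 1 :: real^'n) $ i = (\<Sum>k\<in>UNIV. (U k \<bullet> axis j 1) *\<^sub>R U k) $ i"
      using orthonormal_family_expansion[OF assms] by metis
    also have "\<dots> = (\<Sum>k\<in>UNIV. U k $ j * U k $ i)"
      by (simp add: inner_axis)
    finally show ?thesis by (simp add: axis_def)
  qed
  have "(\<Sum>k\<in>UNIV. U k \<bullet> (M *v U k)) = (\<Sum>k\<in>UNIV. \<Sum>i\<in>UNIV. \<Sum>j\<in>UNIV. M$i$j * (U k $ j * U k $ i))"
    by (simp add: inner_vec_def matrix_vector_mult_def sum_distrib_left algebra_simps)
  also have "\<dots> = (\<Sum>i\<in>UNIV. \<Sum>k\<in>UNIV. \<Sum>j\<in>UNIV. M$i$j * (U k $ j * U k $ i))"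
    by (rule sum.swap)
  also have "\<dots> = (\<Sum>i\<in>UNIV. \<Sum>j\<in>UNIV. \<Sum>k\<in>UNIV. M$i$j * (U k $ j * U k $ i))"
    by (rule sum.cong[OF refl], rule sum.swap)
  also have "\<dots> = (\<Sum>i\<in>UNIV. \<Sum>j\<in>UNIV. M$i$j * (\<Sum>k\<in>UNIV. U k $ j * U k $ i))"
    by (simp add: sum_distrib_left)
  also have "\<dots> = (\<Sum>i\<in>UNIV. M$i$i)"
    by (simp add: delta if_distrib[of "(*) _"] cong: if_cong)
  finally show ?thesis by (simp add: trace_def)
qed

lemma inner_matrix_mul_orthonormal_family:
  fixes U :: "'n \<Rightarrow> real^'n" and M N :: "real^'n^'n"
  assumes "orthonormal_family U"
  shows "U k \<bullet> ((M ** N) *v U l) = (\<Sum>j\<in>UNIV. (U k \<bullet> (M *v U j)) * (U j \<bullet> (N *v U l)))"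
proof -
  have "(M ** N) *v U l = M *v (\<Sum>j\<in>UNIV. (U j \<bullet> (N *v U l)) *\<^sub>R U j)"
    by (metis orthonormal_family_expansion[OF assms] matrix_vector_mul_assoc)
  also have "\<dots> = (\<Sum>j\<in>UNIV. (U j \<bullet> (N *v U l)) *\<^sub>R (M *v U j))"
    by (simp add: linear_sum[OF matrix_vector_mul_linear] matrix_vector_mult_scaleR)
  finally show ?thesis by (simp add: inner_sum_right mult.commute)
qed

lemma mat_eigenvalues_eq_range:
  fixes A :: "real^'n^'n" and U :: "'n \<Rightarrow> real^'n"
  assumes sym: "sym_matrix A" and on: "orthonormal_family U"
    and ev: "\<And>k. A *v U k = p k *\<^sub>R U k"
  shows "mat_eigenvalues A = range p"
proof
  have "U k \<bullet> U k = 1" for k using on by (simp add: orthonormal_family_def)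
  then have "U k \<noteq> 0" for k by (metis inner_zero_left zero_neq_one)
  then show "range p \<subseteq> mat_eigenvalues A"
    unfolding mat_eigenvalues_def using ev by blast
  show "mat_eigenvalues A \<subseteq> range p"
  proof
    fix l assume "l \<in> mat_eigenvalues A"
    then obtain v where v: "v \<noteq> 0" "A *v v = l *\<^sub>R v" unfolding mat_eigenvalues_def by blast
    have "\<exists>k. U k \<bullet> v \<noteq> 0"
    proof (rule ccontr)
      assume "\<not> ?thesis"
      then have "(\<Sum>k\<in>UNIV. (U k \<bullet> v) *\<^sub>R U k) = 0" by simp
      then show False using v(1) orthonormal_family_expansion[OF on, of v] by simp
    qed
    then obtain k where k: "U k \<bullet> v \<noteq> 0" by blast
    have "l * (U k \<bullet> v) = p k * (U k \<bullet> v)"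
      using sym_matrix_inner_commute[OF sym, of "U k" v] v(2) ev[of k] by simp
    then show "l \<in> range p" using k by simp
  qed
qed

lemma pos_def_matrix_eigenvalue_pos:
  fixes A :: "real^'n^'n"
  assumes "pos_def_matrix A" and "l \<in> mat_eigenvalues A"
  shows "0 < l"
proof -
  obtain v where v: "v \<noteq> 0" "A *v v = l *\<^sub>R v"
    using assms(2) unfolding mat_eigenvalues_def by blast
  then have "0 < l * (v \<bullet> v)"
    using assms(1) unfolding pos_def_matrix_def by (metis inner_scaleR_right)
  then show ?thesis using inner_ge_zero[of v] by (auto simp: zero_less_mult_iff)
qed

lemma frob_sq_trace_free:
  fixes X :: "real^'n^'n"
  shows "frob_sq (trace_free X) = frob_sq X - (trace X)\<^sup>2 / real CARD('n)"
proof -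
  have frob: "frob_sq M = (\<Sum>i\<in>UNIV. \<Sum>j\<in>UNIV. (M$i$j)\<^sup>2)" for M :: "real^'n^'n"
    by (simp add: frob_sq_def trace_def matrix_matrix_mult_def transpose_def power2_eq_square)
  define t where "t = trace X / real CARD('n)"
  have row: "(\<Sum>j\<in>UNIV. (X$i$j - (if i = j then t else 0))\<^sup>2)
      = (\<Sum>j\<in>UNIV. (X$i$j)\<^sup>2) - 2 * t * X$i$i + t\<^sup>2" for i
  proof -
    have "(\<Sum>j\<in>UNIV. (X$i$j - (if i = j then t else 0))\<^sup>2)
      = (\<Sum>j\<in>UNIV. (X$i$j)\<^sup>2 + (if i = j then t\<^sup>2 - 2 * t * X$i$j else 0))"
      by (rule sum.cong) (auto simp: power2_diff algebra_simps)
    then show ?thesis by (simp add: sum.distrib)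
  qed
  have "frob_sq (trace_free X) = (\<Sum>i\<in>UNIV. (\<Sum>j\<in>UNIV. (X$i$j)\<^sup>2) - 2 * t * X$i$i + t\<^sup>2)"
    unfolding frob trace_free_def t_def[symmetric] using row by (simp add: mat_def if_distrib cong: if_cong)
  also have "\<dots> = frob_sq X - 2 * t * trace X + t\<^sup>2 * real CARD('n)"
    by (simp add: frob sum.distrib sum_subtractf trace_def sum_distrib_left)
  also have "\<dots> = frob_sq X - (trace X)\<^sup>2 / real CARD('n)"
    unfolding t_def by (simp add: field_simps power2_eq_square)
  finally show ?thesis .
qed

lemma pinched_product_lower_bound:
  fixes a b x y :: real
  assumes "0 < a" "a \<le> x" "x \<le> b" "a \<le> y" "y \<le> b"
  defines "rho \<equiv> a / b"
  defines "c \<equiv> (1 - rho)\<^sup>2 / (1 + rho\<^sup>2)"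
  shows "(1 - c) * (x\<^sup>2 + y\<^sup>2) \<le> 2 * x * y"
proof -
  have "0 < b" "0 < rho" using assms(1-3) by (auto simp: rho_def)
  have "rho * b = a" using \<open>0 < b\<close> by (simp add: rho_def)
  then have "rho * x \<le> y" and "rho * y \<le> x"
    using assms(2-5) \<open>0 < rho\<close> mult_left_mono[of _ b rho] by (smt (verit))+
  have d: "0 < 1 + rho\<^sup>2" by (simp add: add_pos_nonneg)
  then have omc: "1 - c = 2 * rho / (1 + rho\<^sup>2)"
    unfolding c_def by (simp add: field_simps power2_eq_square)
  have "2 * x * y - (1 - c) * (x\<^sup>2 + y\<^sup>2) = 2 * (y - rho * x) * (x - rho * y) / (1 + rho\<^sup>2)"
    unfolding omc using d by (simp add: field_simps power2_eq_square)
  also have "\<dots> \<ge> 0" using \<open>rho * x \<le> y\<close> \<open>rho * y \<le> x\<close> d by simp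
  finally show ?thesis by simp
qed

lemma pinched_weighted_sum_bound:
  fixes p :: "'n::finite \<Rightarrow> real" and s :: "'n \<Rightarrow> 'n \<Rightarrow> real" and a b :: real
  assumes "0 < a" and pinched: "\<And>k. a \<le> p k" "\<And>k. p k \<le> b"
    and s_sym: "\<And>k j. s k j = s j k"
  defines "rho \<equiv> a / b"
  defines "c \<equiv> (1 - rho)\<^sup>2 / (1 + rho\<^sup>2)"
  shows "(\<Sum>k\<in>UNIV. \<Sum>j\<in>UNIV. p k * p j * (s k j)\<^sup>2) - (\<Sum>k\<in>UNIV. \<Sum>j\<in>UNIV. (p k)\<^sup>2 * (s k j)\<^sup>2)
       \<ge> - c * ((\<Sum>k\<in>UNIV. \<Sum>j\<in>UNIV. (p k)\<^sup>2 * (s k j)\<^sup>2) - (\<Sum>k\<in>UNIV. p k * s k k)\<^sup>2 / real CARD('n))"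
proof -
  define F where "F = (\<Sum>k\<in>UNIV. \<Sum>j\<in>UNIV. (p k)\<^sup>2 * (s k j)\<^sup>2)"
  define G where "G = (\<Sum>k\<in>UNIV. \<Sum>j\<in>UNIV. p k * p j * (s k j)\<^sup>2)"
  define g where "g x y = x * y - (1 - c) * (x\<^sup>2 + y\<^sup>2) / 2" for x y
  have "0 \<le> c" unfolding c_def by simp
  have g_nonneg: "0 \<le> g (p k) (p j)" for k j
    using pinched_product_lower_bound[OF \<open>0 < a\<close> pinched(1,2)[of k] pinched(1,2)[of j]]
    unfolding g_def c_def rho_def by simp
  have F_swap: "F = (\<Sum>k\<in>UNIV. \<Sum>j\<in>UNIV. (p j)\<^sup>2 * (s k j)\<^sup>2)"
    unfolding F_def by (subst sum.swap) (simp add: s_sym)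
  have "(\<Sum>k\<in>UNIV. \<Sum>j\<in>UNIV. g (p k) (p j) * (s k j)\<^sup>2)
      = (\<Sum>k\<in>UNIV. \<Sum>j\<in>UNIV. p k * p j * (s k j)\<^sup>2 - (1 - c) / 2 * ((p k)\<^sup>2 * (s k j)\<^sup>2)
          - (1 - c) / 2 * ((p j)\<^sup>2 * (s k j)\<^sup>2))"
    by (intro sum.cong refl) (simp add: g_def field_simps)
  also have "\<dots> = G - (1 - c) / 2 * F - (1 - c) / 2 * F"
    by (subst (2) F_swap) (simp add: G_def F_def sum_subtractf sum_distrib_left)
  finally have "G - (1 - c) * F = (\<Sum>k\<in>UNIV. \<Sum>j\<in>UNIV. g (p k) (p j) * (s k j)\<^sup>2)"
    by simp
  also have "\<dots> \<ge> (\<Sum>k\<in>UNIV. g (p k) (p k) * (s k k)\<^sup>2)"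
    by (intro sum_mono member_le_sum[where f = "\<lambda>j. g (p _) (p j) * (s _ j)\<^sup>2"])
      (simp_all add: g_nonneg)
  also have "(\<Sum>k\<in>UNIV. g (p k) (p k) * (s k k)\<^sup>2) = c * (\<Sum>k\<in>UNIV. (p k * s k k)\<^sup>2)"
    unfolding sum_distrib_left
    by (intro sum.cong refl) (simp add: g_def power_mult_distrib power2_eq_square field_simps)
  also have "\<dots> \<ge> c * ((\<Sum>k\<in>UNIV. p k * s k k)\<^sup>2 / real CARD('n))"
    using sum_squared_le_sum_of_squares[of "\<lambda>k. p k * s k k" UNIV] \<open>0 \<le> c\<close>
    by (intro mult_left_mono) (simp_all add: divide_le_eq)
  finally show ?thesis unfolding F_def[symmetric] G_def[symmetric] by (simp add: algebra_simps)
qed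

lemma sym_matrix_product_in_eigenbasis:
  fixes P S :: "real^'n^'n" and U :: "'n \<Rightarrow> real^'n"
  assumes "sym_matrix P" "sym_matrix S" and on: "orthonormal_family U"
    and ev: "\<And>k. P *v U k = p k *\<^sub>R U k"
  defines "s \<equiv> \<lambda>k j. U k \<bullet> (S *v U j)"
  shows "trace ((P ** S) ** (P ** S)) = (\<Sum>k\<in>UNIV. \<Sum>j\<in>UNIV. p k * p j * (s k j)\<^sup>2)"
    and "frob_sq (P ** S) = (\<Sum>k\<in>UNIV. \<Sum>j\<in>UNIV. (p k)\<^sup>2 * (s k j)\<^sup>2)"
    and "trace (P ** S) = (\<Sum>k\<in>UNIV. p k * s k k)"
proof -
  have s_sym: "s k j = s j k" for k j
    unfolding s_def using sym_matrix_inner_commute[OF assms(2), of "U k" "U j"] by (simp add: inner_commute)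
  have PS: "U k \<bullet> ((P ** S) *v U j) = p k * s k j" for k j
    using sym_matrix_inner_commute[OF assms(1), of "U k" "S *v U j"]
    by (simp add: matrix_vector_mul_assoc[symmetric] ev s_def)
  have SP: "U k \<bullet> ((S ** P) *v U j) = p j * s k j" for k j
    by (simp add: matrix_vector_mul_assoc[symmetric] ev matrix_vector_mult_scaleR s_def)
  have "transpose (P ** S) = S ** P"
    using assms(1,2) by (simp add: matrix_transpose_mul sym_matrix_def)
  then have frob: "frob_sq (P ** S) = (\<Sum>k\<in>UNIV. U k \<bullet> (((P ** S) ** (S ** P)) *v U k))"
    unfolding frob_sq_def by (simp add: trace_eq_sum_orthonormal_family[OF on])
  show "trace ((P ** S) ** (P ** S)) = (\<Sum>k\<in>UNIV. \<Sum>j\<in>UNIV. p k * p j * (s k j)\<^sup>2)"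
    unfolding trace_eq_sum_orthonormal_family[OF on]
      inner_matrix_mul_orthonormal_family[OF on, of _ "P ** S" "P ** S"] PS
    by (simp add: s_sym[of _ k for k] power2_eq_square algebra_simps)
  show "frob_sq (P ** S) = (\<Sum>k\<in>UNIV. \<Sum>j\<in>UNIV. (p k)\<^sup>2 * (s k j)\<^sup>2)"
    unfolding frob inner_matrix_mul_orthonormal_family[OF on, of _ "P ** S" "S ** P"] PS SP
    by (simp add: s_sym[of _ k for k] power2_eq_square algebra_simps)
  show "trace (P ** S) = (\<Sum>k\<in>UNIV. p k * s k k)"
    unfolding trace_eq_sum_orthonormal_family[OF on] PS ..
qed

theorem lemma3p5:
  fixes P S :: "real^'n^'n"
  assumes "sym_matrix P" and "sym_matrix S" and "pos_def_matrix P"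
  defines "X \<equiv> P ** S"
  defines "lmin \<equiv> Min (mat_eigenvalues P)"
  defines "lmax \<equiv> Max (mat_eigenvalues P)"
  defines "rho \<equiv> lmin / lmax"
  defines "c \<equiv> (1 - rho)^2 / (1 + rho^2)"
  shows "trace (X ** X) - frob_sq X \<ge> - c * frob_sq (trace_free X)"
proof -
  obtain U :: "'n \<Rightarrow> real^'n" and p where on: "orthonormal_family U"
    and ev: "\<And>k. P *v U k = p k *\<^sub>R U k"
    using sym_matrix_orthonormal_eigenbasis[OF assms(1)] by blast
  have eig: "mat_eigenvalues P = range p"
    by (rule mat_eigenvalues_eq_range[OF assms(1) on ev])
  have "Min (range p) \<in> range p"
    by (rule Min_in) simp_all
  then have "0 < lmin"
    using pos_def_matrix_eigenvalue_pos[OF assms(3)] unfolding lmin_def eig by blast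
  moreover have "lmin \<le> p k" and "p k \<le> lmax" for k
    unfolding lmin_def lmax_def eig by simp_all
  moreover have "U k \<bullet> (S *v U j) = U j \<bullet> (S *v U k)" for k j
    using sym_matrix_inner_commute[OF assms(2)] by (simp add: inner_commute)
  ultimately have "(\<Sum>k\<in>UNIV. \<Sum>j\<in>UNIV. p k * p j * (U k \<bullet> (S *v U j))\<^sup>2)
      - (\<Sum>k\<in>UNIV. \<Sum>j\<in>UNIV. (p k)\<^sup>2 * (U k \<bullet> (S *v U j))\<^sup>2)
    \<ge> - c * ((\<Sum>k\<in>UNIV. \<Sum>j\<in>UNIV. (p k)\<^sup>2 * (U k \<bullet> (S *v U j))\<^sup>2)
      - (\<Sum>k\<in>UNIV. p k * (U k \<bullet> (S *v U k)))\<^sup>2 / real CARD('n))"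
    unfolding c_def rho_def by (rule pinched_weighted_sum_bound[where s = "\<lambda>k j. U k \<bullet> (S *v U j)"])
  then show ?thesis
    unfolding X_def frob_sq_trace_free sym_matrix_product_in_eigenbasis[OF assms(1,2) on ev] .
qed

end
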